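(* Let $a,b,c,d\in K$ with $c\in\Delta(a)$ and $d\in\Delta(b)$. If $(T-b)^{-1}$ is defined at $a$, then $(T-d)^{-1}$ is defined at $c$.
   Context: Let $K$ be a skew field, $K^*=K\setminus\{0\}$, $\sigma\colon K\to K$ a ring endomorphism and $\delta\colon K\to K$ a $\sigma$-derivation. $K[T;\sigma,\delta]$ is the skew polynomial ring with $Ta=\sigma(a)T+\delta(a)$. The $(\sigma,\delta)$-action of $K^*$ on $K$ is ${}^{b}a=\sigma(b)ab^{-1}+\delta(b)b^{-1}$; $\Delta(a)=\{{}^{b}a:b\in K^*\}$. For $P\in K[T;\sigma,\delta]$ and $a\in K$, $P(a)$ is the unique element of $K$ with $P(T)-P(a)\in K[T;\sigma,\delta](T-a)$. For a set $Z$ with a $K^*$-action, the skew product of functions $Z\to K$ is $(f\diamond g)(z)=f({}^{g(z)}z)g(z)$ if $g(z)\neq0$, $0$ otherwise; $f$ is skew invertible if some $g$ satisfies $f\diamond g=g\diamond f=1$. $K(T;\sigma,\delta)$ is the division ring of left fractions of $K[T;\sigma,\delta]$; each $f$ has a unique minimal representation $P(T)^{-1}Q(T)$ with $P$ monic of least degree; $f$ is defined at $a$ if the function $\Delta(a)\to K$, $c\mapsto P(c)$, is skew invertible. *)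

theory Defs
  imports "HOL-Computational_Algebra.Polynomial"
begin

text \<open>Skew polynomials in K[T;sigma,delta] are represented by their (left) coefficient
  sequences, using the type 'a poly only as a container: the polynomial
  with coefficients p_i stands for the sum of p_i T^i (coefficients on the left).\<close>

definition ring_endo :: "('a::division_ring \<Rightarrow> 'a) \<Rightarrow> bool" where
  "ring_endo \<sigma> \<longleftrightarrow> \<sigma> 1 = 1 \<and> (\<forall>x y. \<sigma> (x + y) = \<sigma> x + \<sigma> y)
     \<and> (\<forall>x y. \<sigma> (x * y) = \<sigma> x * \<sigma> y)"

definition sigma_derivation :: "('a::division_ring \<Rightarrow> 'a) \<Rightarrow> ('a \<Rightarrow> 'a) \<Rightarrow> bool" where
  "sigma_derivation \<sigma> \<delta> \<longleftrightarrow> (\<forall>x y. \<delta> (x + y) = \<delta> x + \<delta> y)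
     \<and> (\<forall>x y. \<delta> (x * y) = \<sigma> x * \<delta> y + \<delta> x * y)"

definition lsmult :: "'a::division_ring \<Rightarrow> 'a poly \<Rightarrow> 'a poly" where
  "lsmult a Q = map_poly (\<lambda>x. a * x) Q"

text \<open>T * Q, using T q = sigma(q) T + delta(q).\<close>
definition tmul :: "('a::division_ring \<Rightarrow> 'a) \<Rightarrow> ('a \<Rightarrow> 'a) \<Rightarrow> 'a poly \<Rightarrow> 'a poly" where
  "tmul \<sigma> \<delta> Q = pCons 0 (map_poly \<sigma> Q) + map_poly \<delta> Q"

fun skmult_list :: "('a::division_ring \<Rightarrow> 'a) \<Rightarrow> ('a \<Rightarrow> 'a) \<Rightarrow> 'a list \<Rightarrow> 'a poly \<Rightarrow> 'a poly" where
  "skmult_list \<sigma> \<delta> [] Q = 0"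
| "skmult_list \<sigma> \<delta> (a # as) Q = lsmult a Q + skmult_list \<sigma> \<delta> as (tmul \<sigma> \<delta> Q)"

definition skew_mult :: "('a::division_ring \<Rightarrow> 'a) \<Rightarrow> ('a \<Rightarrow> 'a) \<Rightarrow> 'a poly \<Rightarrow> 'a poly \<Rightarrow> 'a poly" where
  "skew_mult \<sigma> \<delta> P Q = skmult_list \<sigma> \<delta> (coeffs P) Q"

definition T_minus :: "'a::division_ring \<Rightarrow> 'a poly" where
  "T_minus a = [:- a, 1:]"

definition skew_eval :: "('a::division_ring \<Rightarrow> 'a) \<Rightarrow> ('a \<Rightarrow> 'a) \<Rightarrow> 'a poly \<Rightarrow> 'a \<Rightarrow> 'a" where
  "skew_eval \<sigma> \<delta> P a = (THE r. \<exists>Q. P - [:r:] = skew_mult \<sigma> \<delta> Q (T_minus a))"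

definition sd_act :: "('a::division_ring \<Rightarrow> 'a) \<Rightarrow> ('a \<Rightarrow> 'a) \<Rightarrow> 'a \<Rightarrow> 'a \<Rightarrow> 'a" where
  "sd_act \<sigma> \<delta> b a = \<sigma> b * a * inverse b + \<delta> b * inverse b"

definition sd_class :: "('a::division_ring \<Rightarrow> 'a) \<Rightarrow> ('a \<Rightarrow> 'a) \<Rightarrow> 'a \<Rightarrow> 'a set" where
  "sd_class \<sigma> \<delta> a = {sd_act \<sigma> \<delta> b a | b. b \<noteq> 0}"

definition skew_prod :: "('a::division_ring \<Rightarrow> 'a) \<Rightarrow> ('a \<Rightarrow> 'a) \<Rightarrow> ('a \<Rightarrow> 'a) \<Rightarrow> ('a \<Rightarrow> 'a) \<Rightarrow> 'a \<Rightarrow> 'a" where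
  "skew_prod \<sigma> \<delta> f g z = (if g z \<noteq> 0 then f (sd_act \<sigma> \<delta> (g z) z) * g z else 0)"

definition skew_invertible_on :: "('a::division_ring \<Rightarrow> 'a) \<Rightarrow> ('a \<Rightarrow> 'a) \<Rightarrow> 'a set \<Rightarrow> ('a \<Rightarrow> 'a) \<Rightarrow> bool" where
  "skew_invertible_on \<sigma> \<delta> Z f \<longleftrightarrow> (\<exists>g. \<forall>z\<in>Z. skew_prod \<sigma> \<delta> f g z = 1 \<and> skew_prod \<sigma> \<delta> g f z = 1)"

text \<open>Equality of left fractions P^-1 Q = P'^-1 Q' in K(T;sigma,delta) (P, P' nonzero):
  there are U, V with U nonzero, U P = V P' and U Q = V Q'.\<close>
definition frac_eq :: "('a::division_ring \<Rightarrow> 'a) \<Rightarrow> ('a \<Rightarrow> 'a) \<Rightarrow> 'a poly \<Rightarrow> 'a poly \<Rightarrow> 'a poly \<Rightarrow> 'a poly \<Rightarrow> bool" where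
  "frac_eq \<sigma> \<delta> P Q P' Q' \<longleftrightarrow> P \<noteq> 0 \<and> P' \<noteq> 0 \<and>
     (\<exists>U V. U \<noteq> 0 \<and> skew_mult \<sigma> \<delta> U P = skew_mult \<sigma> \<delta> V P' \<and> skew_mult \<sigma> \<delta> U Q = skew_mult \<sigma> \<delta> V Q')"

definition minimal_rep :: "('a::division_ring \<Rightarrow> 'a) \<Rightarrow> ('a \<Rightarrow> 'a) \<Rightarrow> 'a poly \<Rightarrow> 'a poly \<Rightarrow> 'a poly \<Rightarrow> 'a poly \<Rightarrow> bool" where
  "minimal_rep \<sigma> \<delta> P Q P' Q' \<longleftrightarrow> frac_eq \<sigma> \<delta> P Q P' Q' \<and> lead_coeff P' = 1 \<and>
     (\<forall>P'' Q''. frac_eq \<sigma> \<delta> P Q P'' Q'' \<longrightarrow> degree P' \<le> degree P'')"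

definition frac_defined_at :: "('a::division_ring \<Rightarrow> 'a) \<Rightarrow> ('a \<Rightarrow> 'a) \<Rightarrow> 'a poly \<Rightarrow> 'a poly \<Rightarrow> 'a \<Rightarrow> bool" where
  "frac_defined_at \<sigma> \<delta> P Q a \<longleftrightarrow> (\<exists>P' Q'. minimal_rep \<sigma> \<delta> P Q P' Q' \<and>
     skew_invertible_on \<sigma> \<delta> (sd_class \<sigma> \<delta> a) (\<lambda>c. skew_eval \<sigma> \<delta> P' c))"

end

theory Submission
  imports Defs
begin

text \<open>
  In \<open>K[T;\<sigma>,\<delta>]\<close> leading coefficients multiply up to a twist by a power of \<open>\<sigma>\<close>, so degrees
  add. Hence \<open>T - b\<close> is already the minimal denominator of \<open>(T - b)\<^sup>-\<^sup>1\<close>, and since \<open>T - b\<close>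
  evaluates to \<open>z - b\<close> at \<open>z\<close>, \<open>(T - b)\<^sup>-\<^sup>1\<close> is defined at \<open>a\<close> iff \<open>z \<mapsto> z - b\<close> is skew
  invertible on \<open>\<Delta>(a)\<close>. For nonzero \<open>p, q\<close>, the twist \<open>w \<mapsto> p f(q\<^sup>-\<^sup>1\<cdot>w) q\<^sup>-\<^sup>1\<close> of a skew invertible
  \<open>f\<close> is skew invertible, with inverse the twist of \<open>f\<close>'s inverse by \<open>(q, p)\<close>. If \<open>d = h\<cdot>b\<close>
  then \<open>w - d = \<sigma>(h) (h\<^sup>-\<^sup>1\<cdot>w - b) h\<^sup>-\<^sup>1\<close>, so \<open>w \<mapsto> w - d\<close> is skew invertible on \<open>\<Delta>(a) \<supseteq> \<Delta>(c)\<close>.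
\<close>

lemma inverse_mult_cancel_left:
  fixes a :: "'a::division_ring"
  assumes "a \<noteq> 0"
  shows "inverse a * (a * b) = b"
  using assms by (simp add: mult.assoc[symmetric])

lemma mult_inverse_cancel_left:
  fixes a :: "'a::division_ring"
  assumes "a \<noteq> 0"
  shows "a * (inverse a * b) = b"
  using assms by (simp add: mult.assoc[symmetric])

lemma skew_invertible_on_subset:
  assumes "Y \<subseteq> Z" "skew_invertible_on \<sigma> \<delta> Z f"
  shows "skew_invertible_on \<sigma> \<delta> Y f"
  using assms unfolding skew_invertible_on_def by blast

section \<open>Degrees in \<open>K[T;\<sigma>,\<delta>]\<close>\<close>

lemma coeff_lsmult [simp]: "coeff (lsmult a Q) k = a * coeff Q k"
  by (simp add: lsmult_def coeff_map_poly)

lemma lsmult_0_left [simp]: "lsmult 0 Q = 0"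
  by (simp add: poly_eq_iff)

lemma skmult_list_conv_sum:
  "skmult_list \<sigma> \<delta> xs Q = (\<Sum>i<length xs. lsmult (xs ! i) ((tmul \<sigma> \<delta> ^^ i) Q))"
proof (induction xs arbitrary: Q)
  case Nil
  show ?case by simp
next
  case (Cons a as)
  show ?case
    unfolding length_Cons sum.lessThan_Suc_shift
    by (simp add: Cons funpow_Suc_right del: funpow.simps)
qed

lemma skew_mult_conv_sum:
  assumes "length (coeffs P) \<le> N"
  shows "skew_mult \<sigma> \<delta> P Q = (\<Sum>i<N. lsmult (coeff P i) ((tmul \<sigma> \<delta> ^^ i) Q))"
proof -
  have "skew_mult \<sigma> \<delta> P Q = (\<Sum>i<length (coeffs P). lsmult (coeff P i) ((tmul \<sigma> \<delta> ^^ i) Q))"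
    unfolding skew_mult_def skmult_list_conv_sum
    by (rule sum.cong) (auto simp: nth_default_coeffs_eq[symmetric] nth_default_def)
  also have "\<dots> = (\<Sum>i<N. lsmult (coeff P i) ((tmul \<sigma> \<delta> ^^ i) Q))"
    by (rule sum.mono_neutral_left)
      (use assms in \<open>auto simp: nth_default_coeffs_eq[symmetric] nth_default_def\<close>)
  finally show ?thesis .
qed

lemma length_coeffs_le_Suc_degree: "length (coeffs p) \<le> Suc (degree p)"
  by (cases "p = 0") (simp_all add: length_coeffs_degree)

lemma coeff_skew_mult:
  "coeff (skew_mult \<sigma> \<delta> P Q) k = (\<Sum>i<Suc (degree P). coeff P i * coeff ((tmul \<sigma> \<delta> ^^ i) Q) k)"
  by (simp add: skew_mult_conv_sum[OF length_coeffs_le_Suc_degree] coeff_sum)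

lemma skew_mult_diff_left:
  "skew_mult \<sigma> \<delta> (P1 - P2) Q = skew_mult \<sigma> \<delta> P1 Q - skew_mult \<sigma> \<delta> P2 Q"
proof -
  define N where "N = length (coeffs P1) + length (coeffs P2) + length (coeffs (P1 - P2))"
  have "skew_mult \<sigma> \<delta> (P1 - P2) Q = (\<Sum>i<N. lsmult (coeff (P1 - P2) i) ((tmul \<sigma> \<delta> ^^ i) Q))"
    by (rule skew_mult_conv_sum) (simp add: N_def)
  also have "\<dots> = (\<Sum>i<N. lsmult (coeff P1 i) ((tmul \<sigma> \<delta> ^^ i) Q)
                        - lsmult (coeff P2 i) ((tmul \<sigma> \<delta> ^^ i) Q))"
    by (rule sum.cong) (auto simp: poly_eq_iff algebra_simps)
  also have "\<dots> = skew_mult \<sigma> \<delta> P1 Q - skew_mult \<sigma> \<delta> P2 Q"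
    by (simp add: sum_subtractf skew_mult_conv_sum[of P1 N] skew_mult_conv_sum[of P2 N] N_def)
  finally show ?thesis .
qed

lemma skew_mult_0_left [simp]: "skew_mult \<sigma> \<delta> 0 Q = 0"
  by (simp add: skew_mult_def)

lemma skew_mult_1_left [simp]: "skew_mult \<sigma> \<delta> [:1:] Q = Q"
  by (simp add: skew_mult_def poly_eq_iff)

lemma degree_T_minus [simp]: "degree (T_minus b) = 1"
  and T_minus_nonzero [simp]: "T_minus b \<noteq> 0"
  by (simp_all add: T_minus_def)

locale sigma_derivation_pair =
  fixes \<sigma> \<delta> :: "'a::division_ring \<Rightarrow> 'a"
  assumes ring_endo: "ring_endo \<sigma>"
    and sigma_derivation: "sigma_derivation \<sigma> \<delta>"
begin

sublocale sigma: additive \<sigma>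
  by standard (use ring_endo in \<open>simp add: ring_endo_def\<close>)

sublocale delta: additive \<delta>
  by standard (use sigma_derivation in \<open>simp add: sigma_derivation_def\<close>)

lemmas [simp] = sigma.zero delta.zero

lemma sigma_mult: "\<sigma> (x * y) = \<sigma> x * \<sigma> y"
  and sigma_one [simp]: "\<sigma> 1 = 1"
  using ring_endo by (simp_all add: ring_endo_def)

lemma delta_mult: "\<delta> (x * y) = \<sigma> x * \<delta> y + \<delta> x * y"
  using sigma_derivation by (simp add: sigma_derivation_def)

lemma delta_one [simp]: "\<delta> 1 = 0"
  using delta_mult[of 1 1] by simp

lemma sigma_eq_0_iff [simp]: "\<sigma> x = 0 \<longleftrightarrow> x = 0"
proof
  assume "\<sigma> x = 0"
  hence "\<sigma> (x * inverse x) = 0" by (simp add: sigma_mult)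
  thus "x = 0" by (cases "x = 0") simp_all
qed simp

lemma sigma_power_eq_0_iff [simp]: "(\<sigma> ^^ i) x = 0 \<longleftrightarrow> x = 0"
  by (induction i) simp_all

lemma coeff_tmul_0: "coeff (tmul \<sigma> \<delta> Q) 0 = \<delta> (coeff Q 0)"
  and coeff_tmul_Suc: "coeff (tmul \<sigma> \<delta> Q) (Suc n) = \<sigma> (coeff Q n) + \<delta> (coeff Q (Suc n))"
  by (simp_all add: tmul_def coeff_map_poly)

lemma tmul_diff: "tmul \<sigma> \<delta> (Q1 - Q2) = tmul \<sigma> \<delta> Q1 - tmul \<sigma> \<delta> Q2"
proof (rule poly_eqI)
  fix k
  show "coeff (tmul \<sigma> \<delta> (Q1 - Q2)) k = coeff (tmul \<sigma> \<delta> Q1 - tmul \<sigma> \<delta> Q2) k"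
    by (cases k) (simp_all add: coeff_tmul_0 coeff_tmul_Suc sigma.diff delta.diff)
qed

lemma tmul_power_diff:
  "(tmul \<sigma> \<delta> ^^ i) (Q1 - Q2) = (tmul \<sigma> \<delta> ^^ i) Q1 - (tmul \<sigma> \<delta> ^^ i) Q2"
  by (induction i) (simp_all add: tmul_diff)

lemma skew_mult_diff_right:
  "skew_mult \<sigma> \<delta> P (Q1 - Q2) = skew_mult \<sigma> \<delta> P Q1 - skew_mult \<sigma> \<delta> P Q2"
  by (simp add: skew_mult_conv_sum[of P "length (coeffs P)"] tmul_power_diff sum_subtractf
      poly_eq_iff coeff_sum algebra_simps)

lemma skew_mult_0_right [simp]: "skew_mult \<sigma> \<delta> P 0 = 0"
  using skew_mult_diff_right[of P 0 0] by simp

lemma degree_lead_coeff_tmul: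
  assumes "Q \<noteq> 0"
  shows "degree (tmul \<sigma> \<delta> Q) = Suc (degree Q) \<and> lead_coeff (tmul \<sigma> \<delta> Q) = \<sigma> (lead_coeff Q)"
proof -
  have "coeff (tmul \<sigma> \<delta> Q) k = 0" if "k > Suc (degree Q)" for k
    using that by (cases k) (simp_all add: coeff_tmul_Suc coeff_eq_0)
  hence "degree (tmul \<sigma> \<delta> Q) \<le> Suc (degree Q)"
    by (intro degree_le) auto
  moreover have "coeff (tmul \<sigma> \<delta> Q) (Suc (degree Q)) = \<sigma> (lead_coeff Q)"
    by (simp add: coeff_tmul_Suc coeff_eq_0)
  moreover have "\<sigma> (lead_coeff Q) \<noteq> 0"
    using assms by simp
  ultimately show ?thesis
    by (metis le_antisym le_degree)
qed

lemma degree_lead_coeff_tmul_power: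
  assumes "Q \<noteq> 0"
  shows "degree ((tmul \<sigma> \<delta> ^^ i) Q) = degree Q + i
    \<and> lead_coeff ((tmul \<sigma> \<delta> ^^ i) Q) = (\<sigma> ^^ i) (lead_coeff Q)"
proof (induction i)
  case (Suc i)
  define X where "X = (tmul \<sigma> \<delta> ^^ i) Q"
  have "X \<noteq> 0"
    using Suc assms unfolding X_def by (metis leading_coeff_0_iff sigma_power_eq_0_iff)
  hence "degree (tmul \<sigma> \<delta> X) = Suc (degree X)" "lead_coeff (tmul \<sigma> \<delta> X) = \<sigma> (lead_coeff X)"
    using degree_lead_coeff_tmul by blast+
  with Suc.IH show ?case
    unfolding X_def by (metis add_Suc_right comp_apply funpow.simps(2))
qed simp

lemma coeff_skew_mult_above:
  assumes "Q \<noteq> 0" "k > degree P + degree Q"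
  shows "coeff (skew_mult \<sigma> \<delta> P Q) k = 0"
  unfolding coeff_skew_mult
proof (rule sum.neutral, intro ballI)
  fix i assume "i \<in> {..<Suc (degree P)}"
  hence "k > degree ((tmul \<sigma> \<delta> ^^ i) Q)"
    using assms degree_lead_coeff_tmul_power[OF assms(1)] by auto
  thus "coeff P i * coeff ((tmul \<sigma> \<delta> ^^ i) Q) k = 0"
    by (simp add: coeff_eq_0)
qed

lemma coeff_skew_mult_top:
  assumes "Q \<noteq> 0"
  shows "coeff (skew_mult \<sigma> \<delta> P Q) (degree P + degree Q) = lead_coeff P * (\<sigma> ^^ degree P) (lead_coeff Q)"
proof -
  have "coeff ((tmul \<sigma> \<delta> ^^ i) Q) (degree P + degree Q) = 0" if "i < degree P" for i
    using that degree_lead_coeff_tmul_power[OF assms, of i] by (simp add: coeff_eq_0)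
  moreover have "coeff ((tmul \<sigma> \<delta> ^^ degree P) Q) (degree P + degree Q)
      = (\<sigma> ^^ degree P) (lead_coeff Q)"
    using degree_lead_coeff_tmul_power[OF assms, of "degree P"] by (metis add.commute)
  ultimately show ?thesis
    by (simp add: coeff_skew_mult)
qed

lemma skew_mult_eq_0_iff [simp]: "skew_mult \<sigma> \<delta> P Q = 0 \<longleftrightarrow> P = 0 \<or> Q = 0"
  by (metis coeff_0 coeff_skew_mult_top leading_coeff_0_iff mult_eq_0_iff sigma_power_eq_0_iff
      skew_mult_0_left skew_mult_0_right)

lemma degree_skew_mult:
  assumes "P \<noteq> 0" "Q \<noteq> 0"
  shows "degree (skew_mult \<sigma> \<delta> P Q) = degree P + degree Q"
proof (rule antisym)
  show "degree (skew_mult \<sigma> \<delta> P Q) \<le> degree P + degree Q"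
    using coeff_skew_mult_above[OF assms(2)] by (intro degree_le) auto
  show "degree P + degree Q \<le> degree (skew_mult \<sigma> \<delta> P Q)"
    using assms coeff_skew_mult_top[OF assms(2)] by (intro le_degree) simp
qed

lemma tmul_power_1: "(tmul \<sigma> \<delta> ^^ i) [:1:] = monom 1 i"
proof (induction i)
  case 0
  show ?case by (simp add: monom_0)
next
  case (Suc i)
  have "tmul \<sigma> \<delta> (monom 1 i) = monom 1 (Suc i)"
  proof (rule poly_eqI)
    fix n
    show "coeff (tmul \<sigma> \<delta> (monom 1 i)) n = coeff (monom 1 (Suc i)) n"
      by (cases n) (simp_all add: coeff_monom coeff_tmul_0 coeff_tmul_Suc)
  qed
  with Suc show ?case by simp
qed

lemma skew_mult_1_right [simp]: "skew_mult \<sigma> \<delta> P [:1:] = P"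
proof -
  have "skew_mult \<sigma> \<delta> P [:1:] = (\<Sum>i\<le>degree P. monom (coeff P i) i)"
    unfolding skew_mult_conv_sum[of P "Suc (degree P)", OF length_coeffs_le_Suc_degree] lessThan_Suc_atMost
    by (rule sum.cong) (auto simp: tmul_power_1 poly_eq_iff coeff_monom)
  also have "\<dots> = P" by (rule poly_as_sum_of_monoms)
  finally show ?thesis .
qed

lemma skew_eval_T_minus: "skew_eval \<sigma> \<delta> (T_minus b) z = z - b"
  unfolding skew_eval_def
proof (rule the_equality)
  have "T_minus b - [:z - b:] = skew_mult \<sigma> \<delta> [:1:] (T_minus z)"
    by (simp add: T_minus_def)
  thus "\<exists>Q. T_minus b - [:z - b:] = skew_mult \<sigma> \<delta> Q (T_minus z)" by blast
next
  fix r assume "\<exists>Q. T_minus b - [:r:] = skew_mult \<sigma> \<delta> Q (T_minus z)"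
  then obtain Q where Q: "T_minus b - [:r:] = skew_mult \<sigma> \<delta> Q (T_minus z)" by blast
  have "skew_mult \<sigma> \<delta> (Q - [:1:]) (T_minus z) = [:z - b - r:]"
    unfolding skew_mult_diff_left Q[symmetric] by (simp add: T_minus_def)
  moreover from this have "Q = [:1:]"
    using degree_skew_mult[of "Q - [:1:]" "T_minus z"] by fastforce
  ultimately show "r = z - b" by simp
qed

lemma frac_eq_T_minus_degree:
  assumes "frac_eq \<sigma> \<delta> (T_minus b) [:1:] P Q"
  shows "Q \<noteq> 0 \<and> degree P = degree Q + 1"
proof -
  obtain U V where "P \<noteq> 0" "U \<noteq> 0"
    and UP: "skew_mult \<sigma> \<delta> U (T_minus b) = skew_mult \<sigma> \<delta> V P"
    and UQ: "U = skew_mult \<sigma> \<delta> V Q"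
    using assms unfolding frac_eq_def by auto
  hence "V \<noteq> 0" "Q \<noteq> 0" by auto
  have "degree V + degree P = degree U + 1"
    using UP degree_skew_mult \<open>U \<noteq> 0\<close> \<open>V \<noteq> 0\<close> \<open>P \<noteq> 0\<close> by (metis T_minus_nonzero degree_T_minus)
  moreover have "degree V + degree Q = degree U"
    using UQ degree_skew_mult \<open>V \<noteq> 0\<close> \<open>Q \<noteq> 0\<close> by simp
  ultimately show ?thesis using \<open>Q \<noteq> 0\<close> by simp
qed

lemma minimal_rep_T_minus: "minimal_rep \<sigma> \<delta> (T_minus b) [:1:] (T_minus b) [:1:]"
  unfolding minimal_rep_def
proof (intro conjI allI impI)
  show "frac_eq \<sigma> \<delta> (T_minus b) [:1:] (T_minus b) [:1:]"
    unfolding frac_eq_def by (intro conjI exI[of _ "[:1:]"]) simp_all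
  show "lead_coeff (T_minus b) = 1"
    by (simp add: T_minus_def)
  fix P Q assume "frac_eq \<sigma> \<delta> (T_minus b) [:1:] P Q"
  thus "degree (T_minus b) \<le> degree P"
    using frac_eq_T_minus_degree by fastforce
qed

lemma eq_of_skew_mult_T_minus_eq:
  assumes "U \<noteq> 0"
    and UV: "skew_mult \<sigma> \<delta> U (T_minus b) = skew_mult \<sigma> \<delta> V (T_minus e)"
    and U: "U = skew_mult \<sigma> \<delta> V [:q:]"
  shows "e = b"
proof (rule ccontr)
  assume "e \<noteq> b"
  have "V \<noteq> 0" using \<open>U \<noteq> 0\<close> U by auto
  have "skew_mult \<sigma> \<delta> (U - V) (T_minus b) = skew_mult \<sigma> \<delta> V (T_minus e - T_minus b)"
    by (simp add: skew_mult_diff_left skew_mult_diff_right UV)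
  also have "T_minus e - T_minus b = [:b - e:]"
    by (simp add: T_minus_def)
  finally have diff: "skew_mult \<sigma> \<delta> (U - V) (T_minus b) = skew_mult \<sigma> \<delta> V [:b - e:]" .
  have "U - V = skew_mult \<sigma> \<delta> V [:q:] - skew_mult \<sigma> \<delta> V [:1:]"
    by (simp add: U)
  also have "\<dots> = skew_mult \<sigma> \<delta> V ([:q:] - [:1:])"
    by (rule skew_mult_diff_right[symmetric])
  also have "[:q:] - [:1:] = [:q - 1:]" by simp
  finally have UV_q: "U - V = skew_mult \<sigma> \<delta> V [:q - 1:]" .
  have "U - V \<noteq> 0"
    using diff \<open>V \<noteq> 0\<close> \<open>e \<noteq> b\<close> by auto
  hence "degree (U - V) = degree V"
    using UV_q \<open>V \<noteq> 0\<close> degree_skew_mult[of V "[:q - 1:]"] by fastforce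
  moreover have "degree (U - V) + 1 = degree V"
    using diff \<open>U - V \<noteq> 0\<close> \<open>V \<noteq> 0\<close> \<open>e \<noteq> b\<close> degree_skew_mult by (metis T_minus_nonzero
        degree_T_minus degree_pCons_0 pCons_eq_0_iff right_minus_eq add_0_right)
  ultimately show False by simp
qed

lemma minimal_rep_T_minus_unique:
  assumes "minimal_rep \<sigma> \<delta> (T_minus b) [:1:] P Q"
  shows "P = T_minus b"
proof -
  have fe: "frac_eq \<sigma> \<delta> (T_minus b) [:1:] P Q" and "lead_coeff P = 1"
    and "degree P \<le> 1"
    using assms minimal_rep_T_minus[of b] unfolding minimal_rep_def by auto
  with frac_eq_T_minus_degree[OF fe] have "degree P = 1" "degree Q = 0" "Q \<noteq> 0"
    by auto
  define e where "e = - coeff P 0"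
  have P: "P = T_minus e"
  proof (rule poly_eqI)
    fix n
    show "coeff P n = coeff (T_minus e) n"
      using \<open>degree P = 1\<close> \<open>lead_coeff P = 1\<close>
      by (cases n) (auto simp: T_minus_def e_def coeff_eq_0 coeff_pCons split: nat.split)
  qed
  obtain q where Q: "Q = [:q:]"
    using \<open>degree Q = 0\<close> degree_eq_zeroE by blast
  obtain U V where "U \<noteq> 0"
    and "skew_mult \<sigma> \<delta> U (T_minus b) = skew_mult \<sigma> \<delta> V (T_minus e)"
    and "U = skew_mult \<sigma> \<delta> V [:q:]"
    using fe unfolding frac_eq_def P Q by auto
  hence "e = b" by (rule eq_of_skew_mult_T_minus_eq)
  thus ?thesis by (simp add: P)
qed

lemma frac_defined_at_T_minus_iff:
  "frac_defined_at \<sigma> \<delta> (T_minus b) [:1:] a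
    \<longleftrightarrow> skew_invertible_on \<sigma> \<delta> (sd_class \<sigma> \<delta> a) (\<lambda>z. z - b)"
  unfolding frac_defined_at_def skew_eval_T_minus[abs_def, symmetric]
  using minimal_rep_T_minus minimal_rep_T_minus_unique by blast

section \<open>Twisting skew invertible functions\<close>

lemma sd_act_1 [simp]: "sd_act \<sigma> \<delta> 1 z = z"
  by (simp add: sd_act_def)

lemma sd_act_sd_act:
  assumes "k \<noteq> 0" "j \<noteq> 0"
  shows "sd_act \<sigma> \<delta> k (sd_act \<sigma> \<delta> j z) = sd_act \<sigma> \<delta> (k * j) z"
  using assms by (simp add: sd_act_def sigma_mult delta_mult nonzero_inverse_mult_distrib
      algebra_simps mult_inverse_cancel_left)

lemma sd_act_in_sd_class:
  assumes "w \<in> sd_class \<sigma> \<delta> a" "k \<noteq> 0"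
  shows "sd_act \<sigma> \<delta> k w \<in> sd_class \<sigma> \<delta> a"
proof -
  obtain j where "j \<noteq> 0" "w = sd_act \<sigma> \<delta> j a"
    using assms(1) unfolding sd_class_def by blast
  with assms(2) have "k * j \<noteq> 0" "sd_act \<sigma> \<delta> k w = sd_act \<sigma> \<delta> (k * j) a"
    by (simp_all add: sd_act_sd_act)
  thus ?thesis unfolding sd_class_def by blast
qed

lemma sd_class_subset:
  assumes "c \<in> sd_class \<sigma> \<delta> a"
  shows "sd_class \<sigma> \<delta> c \<subseteq> sd_class \<sigma> \<delta> a"
  using sd_act_in_sd_class[OF assms] unfolding sd_class_def by blast

definition twist :: "'a \<Rightarrow> 'a \<Rightarrow> ('a \<Rightarrow> 'a) \<Rightarrow> 'a \<Rightarrow> 'a" where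
  "twist p q f w = p * f (sd_act \<sigma> \<delta> (inverse q) w) * inverse q"

lemma diff_sd_act_eq_twist:
  assumes "h \<noteq> 0"
  shows "(\<lambda>w. w - sd_act \<sigma> \<delta> h b) = twist (\<sigma> h) h (\<lambda>z. z - b)"
proof
  fix w
  define u where "u = sd_act \<sigma> \<delta> (inverse h) w"
  have "sd_act \<sigma> \<delta> h u = w"
    using assms by (simp add: u_def sd_act_sd_act)
  moreover have "sd_act \<sigma> \<delta> h u - sd_act \<sigma> \<delta> h b = \<sigma> h * (u - b) * inverse h"
    by (simp add: sd_act_def algebra_simps)
  ultimately show "w - sd_act \<sigma> \<delta> h b = twist (\<sigma> h) h (\<lambda>z. z - b) w"
    by (simp add: twist_def u_def)
qed

lemma skew_prod_twist:
  assumes "p \<noteq> 0" "q \<noteq> 0"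
  shows "skew_prod \<sigma> \<delta> (twist p q f) (twist q p g) w
    = p * skew_prod \<sigma> \<delta> f g (sd_act \<sigma> \<delta> (inverse p) w) * inverse p"
proof -
  define v where "v = sd_act \<sigma> \<delta> (inverse p) w"
  have gv: "twist q p g w = q * g v * inverse p"
    by (simp add: twist_def v_def)
  show ?thesis
  proof (cases "g v = 0")
    case True
    thus ?thesis using assms by (simp add: skew_prod_def gv v_def[symmetric])
  next
    case False
    have "sd_act \<sigma> \<delta> (twist q p g w) w = sd_act \<sigma> \<delta> (q * g v) v"
      using sd_act_sd_act[of "q * g v" "inverse p" w] assms False
      by (simp add: gv v_def[symmetric])
    also have "\<dots> = sd_act \<sigma> \<delta> q (sd_act \<sigma> \<delta> (g v) v)"
      using sd_act_sd_act[of q "g v" v] assms False by simp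
    finally have "sd_act \<sigma> \<delta> (inverse q) (sd_act \<sigma> \<delta> (twist q p g w) w) = sd_act \<sigma> \<delta> (g v) v"
      using sd_act_sd_act[of "inverse q" q] assms by simp
    thus ?thesis
      using assms False
      by (simp add: skew_prod_def twist_def gv v_def[symmetric] mult.assoc inverse_mult_cancel_left)
  qed
qed

lemma skew_invertible_on_twist:
  assumes closed: "\<And>k w. k \<noteq> 0 \<Longrightarrow> w \<in> Z \<Longrightarrow> sd_act \<sigma> \<delta> k w \<in> Z"
    and "p \<noteq> 0" "q \<noteq> 0" and "skew_invertible_on \<sigma> \<delta> Z f"
  shows "skew_invertible_on \<sigma> \<delta> Z (twist p q f)"
proof -
  obtain g where g: "\<And>z. z \<in> Z \<Longrightarrow> skew_prod \<sigma> \<delta> f g z = 1 \<and> skew_prod \<sigma> \<delta> g f z = 1"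
    using assms(4) unfolding skew_invertible_on_def by blast
  have "skew_prod \<sigma> \<delta> (twist p q f) (twist q p g) w = 1
      \<and> skew_prod \<sigma> \<delta> (twist q p g) (twist p q f) w = 1" if "w \<in> Z" for w
    using g closed[OF _ \<open>w \<in> Z\<close>] \<open>p \<noteq> 0\<close> \<open>q \<noteq> 0\<close> by (simp add: skew_prod_twist)
  thus ?thesis
    unfolding skew_invertible_on_def by blast
qed

end

theorem proposition3p3:
  fixes \<sigma> \<delta> :: "'a::division_ring \<Rightarrow> 'a" and a b c d :: 'a
  assumes "ring_endo \<sigma>" and "sigma_derivation \<sigma> \<delta>"
    and "c \<in> sd_class \<sigma> \<delta> a" and "d \<in> sd_class \<sigma> \<delta> b"
    and "frac_defined_at \<sigma> \<delta> (T_minus b) [:1:] a"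
  shows "frac_defined_at \<sigma> \<delta> (T_minus d) [:1:] c"
proof -
  interpret sigma_derivation_pair \<sigma> \<delta>
    using assms(1,2) by (rule sigma_derivation_pair.intro)
  obtain h where "h \<noteq> 0" and d: "d = sd_act \<sigma> \<delta> h b"
    using assms(4) unfolding sd_class_def by blast
  have "skew_invertible_on \<sigma> \<delta> (sd_class \<sigma> \<delta> a) (\<lambda>z. z - b)"
    using assms(5) by (simp add: frac_defined_at_T_minus_iff)
  hence "skew_invertible_on \<sigma> \<delta> (sd_class \<sigma> \<delta> a) (\<lambda>w. w - d)"
    using skew_invertible_on_twist[OF sd_act_in_sd_class] \<open>h \<noteq> 0\<close>
    by (simp add: d diff_sd_act_eq_twist)
  hence "skew_invertible_on \<sigma> \<delta> (sd_class \<sigma> \<delta> c) (\<lambda>w. w - d)"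
    by (rule skew_invertible_on_subset[OF sd_class_subset[OF assms(3)]])
  thus ?thesis
    by (simp add: frac_defined_at_T_minus_iff)
qed

end
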